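(* Let $(M,g)$ be a semi-Riemannian manifold with Levi-Civita connection $\overset{\circ}{\nabla}$, and let $\overset{A}{\nabla}$ be an affine connection on $M$ whose torsion $\overset{A}{T}$ is non-vanishing. Define the $(1,2)$-tensor field $U(\omega,X,Y)=\frac12\left(\overset{A}{T}(X^\flat,Y,\omega^\sharp)+\overset{A}{T}(Y^\flat,X,\omega^\sharp)\right)$ and $\nabla_XY=\overset{\circ}{\nabla}_XY+U(-,X,Y)$. Then $(\nabla,U)$ is a Schrödinger connection.
   Context: $X^\flat=g(X,-)$, $\omega^\sharp=g^{-1}(\omega,-)$. Torsion: $\overset{A}{T}(\omega,X,Y)=\omega(\overset{A}{\nabla}_XY-\overset{A}{\nabla}_YX-[X,Y])$. For a $(1,2)$-tensor field $U$, $U(-,X,Y)$ denotes the vector field with $\omega(U(-,X,Y))=U(\omega,X,Y)$. A Schrödinger connection is an affine connection $\nabla_XY=\overset{\circ}{\nabla}_XY+U(-,X,Y)$ where $U$ satisfies, for all vector fields $X,Y$ and one-forms $\omega$: (a) $U(\omega,X,Y)=U(\omega,Y,X)$, and (b) $U(\omega,X,Y)+U(\omega,Y,X)+U(X^\flat,\omega^\sharp,Y)+U(X^\flat,Y,\omega^\sharp)+U(Y^\flat,\omega^\sharp,X)+U(Y^\flat,X,\omega^\sharp)=0$. *)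

theory Defs
  imports "HOL-Analysis.Analysis"
begin

text \<open>Pointwise model at a point of an n-dimensional semi-Riemannian manifold:
 tangent vectors and covectors are elements of real^'n, the pairing of a covector
 w with a vector X is w \<bullet> X, the metric is a symmetric invertible matrix G
 (any signature).\<close>

definition flat :: "real^'n^'n \<Rightarrow> real^'n \<Rightarrow> real^'n" where
  "flat G X = G *v X"

definition sharp :: "real^'n^'n \<Rightarrow> real^'n \<Rightarrow> real^'n" where
  "sharp G w = matrix_inv G *v w"

definition metric :: "real^'n^'n \<Rightarrow> bool" where
  "metric G \<longleftrightarrow> transpose G = G \<and> invertible G"

text \<open>An affine connection A is written as nabla^A_X Y = nabla^o_X Y + K(X,Y), where K
 (the difference tensor from the Levi-Civita connection) is a bilinear vector-valued
 tensor. Since nabla^o is torsion free, the torsion of nabla^A is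
 T(w,X,Y) = w(nabla^A_X Y - nabla^A_Y X - [X,Y]) = w(K(X,Y) - K(Y,X)).\<close>

definition torsion :: "(real^'n \<Rightarrow> real^'n \<Rightarrow> real^'n) \<Rightarrow> real^'n \<Rightarrow> real^'n \<Rightarrow> real^'n \<Rightarrow> real" where
  "torsion K w X Y = w \<bullet> (K X Y - K Y X)"

text \<open>Conditions (a) and (b) making nabla = nabla^o + U(-,X,Y) a Schroedinger connection.\<close>

definition schroedinger_tensor :: "real^'n^'n \<Rightarrow> (real^'n \<Rightarrow> real^'n \<Rightarrow> real^'n \<Rightarrow> real) \<Rightarrow> bool" where
  "schroedinger_tensor G U \<longleftrightarrow>
     (\<forall>w X Y. U w X Y = U w Y X) \<and>
     (\<forall>w X Y. U w X Y + U w Y X + U (flat G X) (sharp G w) Y + U (flat G X) Y (sharp G w)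
              + U (flat G Y) (sharp G w) X + U (flat G Y) X (sharp G w) = 0)"

end

theory Submission
  imports Defs
begin

text \<open>Condition (a) holds because U is symmetrised in X and Y by construction. In condition (b)
 the musical isomorphisms cancel, and the six terms pair off into sums
 T(Z, V, W) + T(Z, W, V), which vanish because torsion is antisymmetric in its vector arguments.\<close>

lemma matrix_inv_mult:
  fixes G :: "'a::semiring_1^'n^'n"
  assumes "invertible G"
  shows "G ** matrix_inv G = mat 1" and "matrix_inv G ** G = mat 1"
proof -
  have "G ** matrix_inv G = mat 1 \<and> matrix_inv G ** G = mat 1"
    using assms unfolding matrix_inv_def invertible_def by (rule someI_ex)
  then show "G ** matrix_inv G = mat 1" and "matrix_inv G ** G = mat 1"
    by auto
qed

lemma sharp_flat:
  assumes "invertible G"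
  shows "sharp G (flat G X) = X"
  unfolding sharp_def flat_def
  by (simp add: matrix_vector_mul_assoc matrix_inv_mult[OF assms])

lemma flat_sharp:
  assumes "invertible G"
  shows "flat G (sharp G w) = w"
  unfolding sharp_def flat_def
  by (simp add: matrix_vector_mul_assoc matrix_inv_mult[OF assms])

lemma torsion_swap: "torsion K w Y X = - torsion K w X Y"
  unfolding torsion_def by (simp add: inner_diff_right)

lemma schroedinger_tensor_symmetrised:
  fixes T :: "real^'n \<Rightarrow> real^'n \<Rightarrow> real^'n \<Rightarrow> real"
  assumes "invertible G"
    and T_swap: "\<And>w X Y. T w Y X = - T w X Y"
  shows "schroedinger_tensor G
           (\<lambda>w X Y. (1/2) * (T (flat G X) Y (sharp G w) + T (flat G Y) X (sharp G w)))"
  unfolding schroedinger_tensor_def sharp_flat[OF assms(1)] flat_sharp[OF assms(1)]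
  apply (intro conjI allI)
  subgoal by simp
  subgoal for w X Y
    using T_swap[of w X Y] T_swap[of "flat G X" "sharp G w" Y] T_swap[of "flat G Y" "sharp G w" X]
    by (simp add: field_simps)
  done

theorem mainTheorem5:
  fixes G :: "real^'n^'n" and K :: "real^'n \<Rightarrow> real^'n \<Rightarrow> real^'n"
    and U :: "real^'n \<Rightarrow> real^'n \<Rightarrow> real^'n \<Rightarrow> real"
  assumes "metric G"
    and "bilinear K"
    and "\<exists>w X Y. torsion K w X Y \<noteq> 0"
    and "\<And>w X Y. U w X Y = (1/2) * (torsion K (flat G X) Y (sharp G w) + torsion K (flat G Y) X (sharp G w))"
  shows "schroedinger_tensor G U"
proof -
  have "invertible G"
    using assms(1) by (simp add: metric_def)
  then have "schroedinger_tensor G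
      (\<lambda>w X Y. (1/2) * (torsion K (flat G X) Y (sharp G w) + torsion K (flat G Y) X (sharp G w)))"
    using torsion_swap by (rule schroedinger_tensor_symmetrised)
  moreover have "U = (\<lambda>w X Y. (1/2) * (torsion K (flat G X) Y (sharp G w) + torsion K (flat G Y) X (sharp G w)))"
    using assms(4) by blast
  ultimately show ?thesis
    by simp
qed

end
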